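(* Let $\mathbf{C}_1$ and $\mathbf{C}_2$ be categories such that $\hom_{\mathbf{C}_i}(\mathcal{A},\mathcal{B})$ is finite for each $i\in\{1,2\}$ and all objects $\mathcal{A},\mathcal{B}$ of $\mathbf{C}_i$. If $\mathbf{C}_1$ and $\mathbf{C}_2$ both have the Ramsey property for objects, then $\mathbf{C}_1\times\mathbf{C}_2$ has the Ramsey property for objects; and if $\mathbf{C}_1$ and $\mathbf{C}_2$ both have the Ramsey property for morphisms, then $\mathbf{C}_1\times\mathbf{C}_2$ has the Ramsey property for morphisms.
   Context: $\mathbf{C}_1\times\mathbf{C}_2$ is the product category: objects are pairs $(\mathcal{A}_1,\mathcal{A}_2)$ of objects, morphisms are pairs $(f_1,f_2)$ with $f_i$ a morphism of $\mathbf{C}_i$, composed componentwise. For objects $\mathcal{A},\mathcal{B}$ of a category, $\hom(\mathcal{A},\mathcal{B})$ is the set of morphisms $\mathcal{A}\to\mathcal{B}$; write $\mathcal{A}\to\mathcal{B}$ if it is nonempty. $\mathrm{Aut}(\mathcal{A})$ is the set of invertible morphisms $\mathcal{A}\to\mathcal{A}$. On $\hom(\mathcal{A},\mathcal{B})$ let $f\sim_\mathcal{A} f'$ iff $f'=f\cdot\alpha$ for some $\alpha\in\mathrm{Aut}(\mathcal{A})$, and $\binom{\mathcal{B}}{\mathcal{A}}=\hom(\mathcal{A},\mathcal{B})/\sim_\mathcal{A}$; for $w:\mathcal{B}\to\mathcal{C}$ set $w\cdot(f/\sim_\mathcal{A})=(w\cdot f)/\sim_\mathcal{A}$. A $k$-coloring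 of a set is a decomposition into $k$ pairwise disjoint sets $\mathcal{M}_1,\dots,\mathcal{M}_k$. For $k\ge2$, $\mathcal{C}\longrightarrow(\mathcal{B})^{\mathcal{A}}_k$ means $\mathcal{A}\to\mathcal{B}\to\mathcal{C}$ and for every $k$-coloring of $\binom{\mathcal{C}}{\mathcal{A}}$ there are $i$ and $w:\mathcal{B}\to\mathcal{C}$ with $w\cdot\binom{\mathcal{B}}{\mathcal{A}}\subseteq\mathcal{M}_i$; $\mathcal{C}\overset{hom}{\longrightarrow}(\mathcal{B})^{\mathcal{A}}_k$ is defined likewise with $\hom(\mathcal{A},\mathcal{C})$ and $w\cdot\hom(\mathcal{A},\mathcal{B})$. A category has the Ramsey property for objects (resp. morphisms) if for every $k\ge2$ and all objects $\mathcal{A}\to\mathcal{B}$ there is an object $\mathcal{C}$ with $\mathcal{C}\longrightarrow(\mathcal{B})^{\mathcal{A}}_k$ (resp. $\mathcal{C}\overset{hom}{\longrightarrow}(\mathcal{B})^{\mathcal{A}}_k$). *)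

theory Defs
  imports Main
begin

text \<open>A (small) category: objects, arrows, domain, codomain, identities and
composition; Comp g f is the composite g . f (first f, then g).\<close>

record ('o, 'm) cat =
  Obj :: "'o set"
  Arr :: "'m set"
  Dom :: "'m \<Rightarrow> 'o"
  Cod :: "'m \<Rightarrow> 'o"
  Id  :: "'o \<Rightarrow> 'm"
  Comp :: "'m \<Rightarrow> 'm \<Rightarrow> 'm"

definition hom :: "('o, 'm) cat \<Rightarrow> 'o \<Rightarrow> 'o \<Rightarrow> 'm set" where
  "hom C A B = {f \<in> Arr C. Dom C f = A \<and> Cod C f = B}"

definition is_category :: "('o, 'm) cat \<Rightarrow> bool" where
  "is_category C \<longleftrightarrow>
     (\<forall>f \<in> Arr C. Dom C f \<in> Obj C \<and> Cod C f \<in> Obj C) \<and>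
     (\<forall>A \<in> Obj C. Id C A \<in> hom C A A) \<and>
     (\<forall>A \<in> Obj C. \<forall>B \<in> Obj C. \<forall>Cc \<in> Obj C. \<forall>f \<in> hom C A B. \<forall>g \<in> hom C B Cc.
         Comp C g f \<in> hom C A Cc) \<and>
     (\<forall>A \<in> Obj C. \<forall>B \<in> Obj C. \<forall>f \<in> hom C A B.
         Comp C (Id C B) f = f \<and> Comp C f (Id C A) = f) \<and>
     (\<forall>A \<in> Obj C. \<forall>B \<in> Obj C. \<forall>Cc \<in> Obj C. \<forall>D \<in> Obj C.
       \<forall>f \<in> hom C A B. \<forall>g \<in> hom C B Cc. \<forall>h \<in> hom C Cc D.
         Comp C h (Comp C g f) = Comp C (Comp C h g) f)"

definition prod_cat :: "('o1, 'm1) cat \<Rightarrow> ('o2, 'm2) cat \<Rightarrow> ('o1 \<times> 'o2, 'm1 \<times> 'm2) cat" where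
  "prod_cat C1 C2 =
     \<lparr> Obj = Obj C1 \<times> Obj C2,
       Arr = Arr C1 \<times> Arr C2,
       Dom = (\<lambda>(f1, f2). (Dom C1 f1, Dom C2 f2)),
       Cod = (\<lambda>(f1, f2). (Cod C1 f1, Cod C2 f2)),
       Id = (\<lambda>(A1, A2). (Id C1 A1, Id C2 A2)),
       Comp = (\<lambda>(g1, g2) (f1, f2). (Comp C1 g1 f1, Comp C2 g2 f2)) \<rparr>"

definition locally_finite :: "('o, 'm) cat \<Rightarrow> bool" where
  "locally_finite C \<longleftrightarrow> (\<forall>A \<in> Obj C. \<forall>B \<in> Obj C. finite (hom C A B))"

definition arrow_to :: "('o, 'm) cat \<Rightarrow> 'o \<Rightarrow> 'o \<Rightarrow> bool" where
  "arrow_to C A B \<longleftrightarrow> hom C A B \<noteq> {}"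

definition Aut :: "('o, 'm) cat \<Rightarrow> 'o \<Rightarrow> 'm set" where
  "Aut C A = {\<alpha> \<in> hom C A A. \<exists>\<beta> \<in> hom C A A.
                 Comp C \<beta> \<alpha> = Id C A \<and> Comp C \<alpha> \<beta> = Id C A}"

definition aut_class :: "('o, 'm) cat \<Rightarrow> 'o \<Rightarrow> 'm \<Rightarrow> 'm set" where
  "aut_class C A f = {Comp C f \<alpha> | \<alpha>. \<alpha> \<in> Aut C A}"

definition binom :: "('o, 'm) cat \<Rightarrow> 'o \<Rightarrow> 'o \<Rightarrow> 'm set set" where
  "binom C B A = aut_class C A ` hom C A B"

definition is_coloring :: "nat \<Rightarrow> 'a set \<Rightarrow> (nat \<Rightarrow> 'a set) \<Rightarrow> bool" where
  "is_coloring k S M \<longleftrightarrow> (\<Union>i<k. M i) = S \<and>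
      (\<forall>i<k. \<forall>j<k. i \<noteq> j \<longrightarrow> M i \<inter> M j = {})"

text \<open>Cc --> (B)^A_k  (colourings of objects, i.e. of Aut-classes)\<close>
definition ramsey_arrow :: "('o, 'm) cat \<Rightarrow> 'o \<Rightarrow> 'o \<Rightarrow> 'o \<Rightarrow> nat \<Rightarrow> bool" where
  "ramsey_arrow C Cc B A k \<longleftrightarrow> arrow_to C A B \<and> arrow_to C B Cc \<and>
     (\<forall>M. is_coloring k (binom C Cc A) M \<longrightarrow>
        (\<exists>i<k. \<exists>w \<in> hom C B Cc.
           (\<forall>f \<in> hom C A B. aut_class C A (Comp C w f) \<in> M i)))"

definition ramsey_arrow_hom :: "('o, 'm) cat \<Rightarrow> 'o \<Rightarrow> 'o \<Rightarrow> 'o \<Rightarrow> nat \<Rightarrow> bool" where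
  "ramsey_arrow_hom C Cc B A k \<longleftrightarrow> arrow_to C A B \<and> arrow_to C B Cc \<and>
     (\<forall>M. is_coloring k (hom C A Cc) M \<longrightarrow>
        (\<exists>i<k. \<exists>w \<in> hom C B Cc. Comp C w ` hom C A B \<subseteq> M i))"

definition ramsey_objects :: "('o, 'm) cat \<Rightarrow> bool" where
  "ramsey_objects C \<longleftrightarrow> (\<forall>k \<ge> 2. \<forall>A \<in> Obj C. \<forall>B \<in> Obj C. arrow_to C A B \<longrightarrow>
      (\<exists>Cc \<in> Obj C. ramsey_arrow C Cc B A k))"

definition ramsey_morphisms :: "('o, 'm) cat \<Rightarrow> bool" where
  "ramsey_morphisms C \<longleftrightarrow> (\<forall>k \<ge> 2. \<forall>A \<in> Obj C. \<forall>B \<in> Obj C. arrow_to C A B \<longrightarrow>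
      (\<exists>Cc \<in> Obj C. ramsey_arrow_hom C Cc B A k))"

end

theory Submission
  imports Defs "HOL-Library.FuncSet"
begin

text \<open>A colouring of the arrows (or of their Aut-classes) from \<open>(A1, A2)\<close> to \<open>(D1, D2)\<close>
can be curried into a colouring of the arrows \<open>A1 \<rightarrow> D1\<close> whose colours are the
\<open>k\<close>-colourings of the finitely many arrows \<open>A2 \<rightarrow> D2\<close>. Take \<open>D2\<close> Ramsey for \<open>k\<close>
colours and \<open>D1\<close> Ramsey for this finite number of colours. A copy \<open>w1\<close> of \<open>B1\<close> on which
the curried colouring is constant leaves a single \<open>k\<close>-colouring of the arrows
\<open>A2 \<rightarrow> D2\<close>, which is monochromatic on some copy \<open>w2\<close> of \<open>B2\<close>; then \<open>(w1, w2)\<close> is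
a monochromatic copy of \<open>(B1, B2)\<close>.\<close>

lemma hom_comp_closed:
  assumes "is_category C" "f \<in> hom C A B" "g \<in> hom C B D"
  shows "Comp C g f \<in> hom C A D"
proof -
  have "A \<in> Obj C" "B \<in> Obj C" "D \<in> Obj C"
    using assms unfolding is_category_def hom_def by auto
  with assms show ?thesis unfolding is_category_def by blast
qed

lemma Obj_prod_cat: "Obj (prod_cat C1 C2) = Obj C1 \<times> Obj C2"
  unfolding prod_cat_def by simp

lemma hom_prod_cat: "hom (prod_cat C1 C2) (A1, A2) (B1, B2) = hom C1 A1 B1 \<times> hom C2 A2 B2"
  unfolding hom_def prod_cat_def by auto

lemma Comp_prod_cat: "Comp (prod_cat C1 C2) (g1, g2) (f1, f2) = (Comp C1 g1 f1, Comp C2 g2 f2)"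
  unfolding prod_cat_def by simp

lemma arrow_to_prod_cat:
  "arrow_to (prod_cat C1 C2) (A1, A2) (B1, B2) \<longleftrightarrow> arrow_to C1 A1 B1 \<and> arrow_to C2 A2 B2"
  unfolding arrow_to_def hom_prod_cat by auto

lemma Aut_prod_cat: "Aut (prod_cat C1 C2) (A1, A2) = Aut C1 A1 \<times> Aut C2 A2"
  unfolding Aut_def hom_prod_cat by (auto simp: prod_cat_def)

lemma aut_class_prod_cat:
  "aut_class (prod_cat C1 C2) (A1, A2) (f1, f2) = aut_class C1 A1 f1 \<times> aut_class C2 A2 f2"
  unfolding aut_class_def Aut_prod_cat by (auto simp: prod_cat_def)

lemma is_category_prod_cat:
  assumes "is_category C1" "is_category C2"
  shows "is_category (prod_cat C1 C2)"
  using assms unfolding is_category_def prod_cat_def hom_def by (auto 0 3)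

text \<open>Colourings are maps into a colour set \<open>Y\<close>; \<open>q\<close> sends an arrow to the thing being
coloured: its Aut-class for the Ramsey property for objects, the arrow itself for morphisms.\<close>

definition mono_copies :: "('o, 'm) cat \<Rightarrow> ('m \<Rightarrow> 'x) \<Rightarrow> 'o \<Rightarrow> 'o \<Rightarrow> 'o \<Rightarrow> 'c set \<Rightarrow> bool" where
  "mono_copies C q D B A Y \<longleftrightarrow>
     (\<forall>c \<in> q ` hom C A D \<rightarrow> Y. \<exists>w \<in> hom C B D. \<exists>y. \<forall>f \<in> hom C A B. c (q (Comp C w f)) = y)"

lemma coloring_arrow_iff_mono_copies:
  assumes "is_category C" "arrow_to C A B"
  shows "(\<forall>M. is_coloring k (q ` hom C A D) M \<longrightarrow>
            (\<exists>i<k. \<exists>w \<in> hom C B D. \<forall>f \<in> hom C A B. q (Comp C w f) \<in> M i))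
         \<longleftrightarrow> mono_copies C q D B A {..<k}"
proof
  assume coloring_arrow: "\<forall>M. is_coloring k (q ` hom C A D) M \<longrightarrow>
            (\<exists>i<k. \<exists>w \<in> hom C B D. \<forall>f \<in> hom C A B. q (Comp C w f) \<in> M i)"
  show "mono_copies C q D B A {..<k}"
    unfolding mono_copies_def
  proof
    fix c assume "c \<in> q ` hom C A D \<rightarrow> {..<k}"
    then have "is_coloring k (q ` hom C A D) (\<lambda>i. {x \<in> q ` hom C A D. c x = i})"
      unfolding is_coloring_def by auto
    then obtain i w
      where "w \<in> hom C B D" "\<forall>f \<in> hom C A B. q (Comp C w f) \<in> {x \<in> q ` hom C A D. c x = i}"
      using coloring_arrow[rule_format, OF \<open>is_coloring k _ _\<close>] by blast
    then show "\<exists>w \<in> hom C B D. \<exists>y. \<forall>f \<in> hom C A B. c (q (Comp C w f)) = y"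
      by auto
  qed
next
  assume mono: "mono_copies C q D B A {..<k}"
  show "\<forall>M. is_coloring k (q ` hom C A D) M \<longrightarrow>
            (\<exists>i<k. \<exists>w \<in> hom C B D. \<forall>f \<in> hom C A B. q (Comp C w f) \<in> M i)"
  proof (intro allI impI)
    fix M assume M: "is_coloring k (q ` hom C A D) M"
    define colour where "colour x = (SOME i. i < k \<and> x \<in> M i)" for x
    have colour: "colour x < k \<and> x \<in> M (colour x)" if "x \<in> q ` hom C A D" for x
    proof -
      have "x \<in> (\<Union>i<k. M i)"
        using M that by (simp add: is_coloring_def)
      then have "\<exists>i. i < k \<and> x \<in> M i"
        by blast
      then have "(\<lambda>i. i < k \<and> x \<in> M i) (colour x)"
        unfolding colour_def by (rule someI_ex)
      then show ?thesis
        by simp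
    qed
    then have "colour \<in> q ` hom C A D \<rightarrow> {..<k}"
      by auto
    with mono obtain w y where w: "w \<in> hom C B D" "\<forall>f \<in> hom C A B. colour (q (Comp C w f)) = y"
      unfolding mono_copies_def by blast
    have in_classes: "q (Comp C w f) \<in> q ` hom C A D" if "f \<in> hom C A B" for f
      using hom_comp_closed[OF assms(1) that w(1)] by blast
    obtain f0 where f0: "f0 \<in> hom C A B"
      using assms(2) unfolding arrow_to_def by blast
    have "y < k"
      using colour[OF in_classes[OF f0]] w(2) f0 by simp
    moreover have "\<forall>f \<in> hom C A B. q (Comp C w f) \<in> M y"
      using colour[OF in_classes] w(2) by simp
    ultimately show "\<exists>i<k. \<exists>w \<in> hom C B D. \<forall>f \<in> hom C A B. q (Comp C w f) \<in> M i"
      using w(1) by blast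
  qed
qed

lemma ramsey_arrow_iff_mono_copies:
  assumes "is_category C"
  shows "ramsey_arrow C D B A k \<longleftrightarrow>
           arrow_to C A B \<and> arrow_to C B D \<and> mono_copies C (aut_class C A) D B A {..<k}"
  using coloring_arrow_iff_mono_copies[OF assms, of A B k "aut_class C A" D]
  unfolding ramsey_arrow_def binom_def by blast

lemma ramsey_arrow_hom_iff_mono_copies:
  assumes "is_category C"
  shows "ramsey_arrow_hom C D B A k \<longleftrightarrow>
           arrow_to C A B \<and> arrow_to C B D \<and> mono_copies C (\<lambda>f. f) D B A {..<k}"
  using coloring_arrow_iff_mono_copies[OF assms, of A B k "\<lambda>f. f" D]
  unfolding ramsey_arrow_hom_def image_ident image_subset_iff by blast

lemma mono_copies_inj_on:
  assumes "is_category C" "mono_copies C q D B A Z" "inj_on e Y" "e ` Y \<subseteq> Z"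
  shows "mono_copies C q D B A Y"
  unfolding mono_copies_def
proof
  fix c assume c: "c \<in> q ` hom C A D \<rightarrow> Y"
  then have "e \<circ> c \<in> q ` hom C A D \<rightarrow> Z"
    using assms(4) by fastforce
  with assms(2) obtain w z where w: "w \<in> hom C B D" "\<forall>f \<in> hom C A B. e (c (q (Comp C w f))) = z"
    unfolding mono_copies_def by fastforce
  have "c (q (Comp C w f)) \<in> Y" if "f \<in> hom C A B" for f
    using c hom_comp_closed[OF assms(1) that w(1)] by blast
  then have "c (q (Comp C w f)) = c (q (Comp C w f'))" if "f \<in> hom C A B" "f' \<in> hom C A B" for f f'
    using that w(2) assms(3) by (metis inj_on_def)
  with w(1) show "\<exists>w \<in> hom C B D. \<exists>y. \<forall>f \<in> hom C A B. c (q (Comp C w f)) = y"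
    by metis
qed

lemma mono_copies_finite_colours:
  assumes "is_category C" "mono_copies C q D B A {..<k}" "finite Y" "card Y \<le> k"
  shows "mono_copies C q D B A Y"
proof -
  obtain e where "bij_betw e Y {0..<card Y}"
    using ex_bij_betw_finite_nat[OF assms(3)] by blast
  then have "inj_on e Y" "e ` Y \<subseteq> {..<k}"
    using assms(4) by (auto simp: bij_betw_def)
  then show ?thesis
    using mono_copies_inj_on[OF assms(1,2)] by blast
qed

lemma mono_copies_prod_cat:
  assumes "is_category C1" "is_category C2"
    and q: "\<And>f1 f2. q (f1, f2) = join (q1 f1) (q2 f2)"
    and classes2: "q2 ` hom C2 A2 D2 = S2"
    and "f0 \<in> hom C1 A1 B1"
    and mono1: "mono_copies C1 q1 D1 B1 A1 (S2 \<rightarrow>\<^sub>E Y)"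
    and mono2: "mono_copies C2 q2 D2 B2 A2 Y"
  shows "mono_copies (prod_cat C1 C2) q (D1, D2) (B1, B2) (A1, A2) Y"
  unfolding mono_copies_def
proof
  fix c assume c: "c \<in> q ` hom (prod_cat C1 C2) (A1, A2) (D1, D2) \<rightarrow> Y"
  have c_join: "c (join (q1 f1) (q2 f2)) \<in> Y" if "f1 \<in> hom C1 A1 D1" "f2 \<in> hom C2 A2 D2" for f1 f2
    using c that q[of f1 f2, symmetric] by (auto simp: hom_prod_cat)
  define c1 where "c1 x1 = (\<lambda>x2 \<in> S2. c (join x1 x2))" for x1
  have "c1 \<in> q1 ` hom C1 A1 D1 \<rightarrow> S2 \<rightarrow>\<^sub>E Y"
    using c_join unfolding c1_def classes2[symmetric] by auto
  with mono1 obtain w1 y1 where w1: "w1 \<in> hom C1 B1 D1"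
    and const1: "\<forall>f1 \<in> hom C1 A1 B1. c1 (q1 (Comp C1 w1 f1)) = y1"
    unfolding mono_copies_def by blast
  define c2 where "c2 x2 = c (join (q1 (Comp C1 w1 f0)) x2)" for x2
  have "c2 \<in> q2 ` hom C2 A2 D2 \<rightarrow> Y"
    using c_join hom_comp_closed[OF assms(1,5) w1] unfolding c2_def by auto
  with mono2 obtain w2 y where w2: "w2 \<in> hom C2 B2 D2"
    and const2: "\<forall>f2 \<in> hom C2 A2 B2. c2 (q2 (Comp C2 w2 f2)) = y"
    unfolding mono_copies_def by blast
  have "c (q (Comp (prod_cat C1 C2) (w1, w2) f)) = y"
    if f_hom: "f \<in> hom (prod_cat C1 C2) (A1, A2) (B1, B2)" for f
  proof -
    obtain f1 f2 where f: "f = (f1, f2)" "f1 \<in> hom C1 A1 B1" "f2 \<in> hom C2 A2 B2"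
      using f_hom by (cases f) (auto simp: hom_prod_cat)
    have x2: "q2 (Comp C2 w2 f2) \<in> S2"
      using classes2 hom_comp_closed[OF assms(2) f(3) w2] by blast
    have "c (q (Comp (prod_cat C1 C2) (w1, w2) f)) = c1 (q1 (Comp C1 w1 f1)) (q2 (Comp C2 w2 f2))"
      using x2 by (simp add: f Comp_prod_cat q c1_def)
    also have "\<dots> = c1 (q1 (Comp C1 w1 f0)) (q2 (Comp C2 w2 f2))"
      using const1 f(2) assms(5) by simp
    also have "\<dots> = c2 (q2 (Comp C2 w2 f2))"
      using x2 by (simp add: c1_def c2_def)
    also have "\<dots> = y"
      using const2 f(3) by simp
    finally show ?thesis .
  qed
  moreover have "(w1, w2) \<in> hom (prod_cat C1 C2) (B1, B2) (D1, D2)"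
    using w1 w2 by (simp add: hom_prod_cat)
  ultimately show "\<exists>w \<in> hom (prod_cat C1 C2) (B1, B2) (D1, D2). \<exists>y.
      \<forall>f \<in> hom (prod_cat C1 C2) (A1, A2) (B1, B2). c (q (Comp (prod_cat C1 C2) w f)) = y"
    by blast
qed

lemma prod_cat_arrow_cases:
  assumes "A \<in> Obj (prod_cat C1 C2)" "B \<in> Obj (prod_cat C1 C2)" "arrow_to (prod_cat C1 C2) A B"
  obtains A1 A2 B1 B2 where "A = (A1, A2)" "B = (B1, B2)"
    and "A1 \<in> Obj C1" "A2 \<in> Obj C2" "B1 \<in> Obj C1" "B2 \<in> Obj C2"
    and "arrow_to C1 A1 B1" "arrow_to C2 A2 B2"
  using assms that by (cases A, cases B) (auto simp: Obj_prod_cat arrow_to_prod_cat)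

lemma ramsey_objects_prod_cat:
  assumes cat1: "is_category C1" and cat2: "is_category C2" and "locally_finite C2"
    and "ramsey_objects C1" "ramsey_objects C2"
  shows "ramsey_objects (prod_cat C1 C2)"
  unfolding ramsey_objects_def
proof (intro allI impI ballI)
  fix k :: nat and A B
  assume "2 \<le> k"
    and AB: "A \<in> Obj (prod_cat C1 C2)" "B \<in> Obj (prod_cat C1 C2)" "arrow_to (prod_cat C1 C2) A B"
  obtain A1 A2 B1 B2 where split: "A = (A1, A2)" "B = (B1, B2)"
    and objs: "A1 \<in> Obj C1" "A2 \<in> Obj C2" "B1 \<in> Obj C1" "B2 \<in> Obj C2"
    and arrows: "arrow_to C1 A1 B1" "arrow_to C2 A2 B2"
    by (rule prod_cat_arrow_cases[OF AB])
  obtain D2 where D2: "D2 \<in> Obj C2" "ramsey_arrow C2 D2 B2 A2 k"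
    using assms(5) \<open>2 \<le> k\<close> objs arrows unfolding ramsey_objects_def by blast
  define Y where "Y = binom C2 D2 A2 \<rightarrow>\<^sub>E {..<k}"
  have "finite Y"
    using assms(3) objs D2(1) by (simp add: Y_def binom_def locally_finite_def finite_PiE)
  obtain D1 where D1: "D1 \<in> Obj C1" "ramsey_arrow C1 D1 B1 A1 (max 2 (card Y))"
    using assms(4) objs arrows unfolding ramsey_objects_def by (meson max.cobounded1)
  have "mono_copies C1 (aut_class C1 A1) D1 B1 A1 {..<max 2 (card Y)}"
    using D1(2) ramsey_arrow_iff_mono_copies[OF cat1] by blast
  then have mono1: "mono_copies C1 (aut_class C1 A1) D1 B1 A1 Y"
    by (rule mono_copies_finite_colours[OF cat1 _ \<open>finite Y\<close>]) simp
  have mono2: "mono_copies C2 (aut_class C2 A2) D2 B2 A2 {..<k}"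
    using D2(2) ramsey_arrow_iff_mono_copies[OF cat2] by blast
  obtain f0 where f0: "f0 \<in> hom C1 A1 B1"
    using arrows(1) unfolding arrow_to_def by blast
  have "mono_copies (prod_cat C1 C2) (aut_class (prod_cat C1 C2) (A1, A2))
      (D1, D2) (B1, B2) (A1, A2) {..<k}"
    by (rule mono_copies_prod_cat[where join = "\<lambda>X1 X2. X1 \<times> X2",
          OF cat1 cat2 aut_class_prod_cat _ f0 mono1[unfolded Y_def] mono2])
      (simp add: binom_def)
  then have "ramsey_arrow (prod_cat C1 C2) (D1, D2) B A k"
    using arrows D1(2) D2(2)
    by (simp add: split ramsey_arrow_iff_mono_copies is_category_prod_cat cat1 cat2 arrow_to_prod_cat)
  moreover have "(D1, D2) \<in> Obj (prod_cat C1 C2)"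
    using D1(1) D2(1) by (simp add: Obj_prod_cat)
  ultimately show "\<exists>D \<in> Obj (prod_cat C1 C2). ramsey_arrow (prod_cat C1 C2) D B A k"
    by blast
qed

lemma ramsey_morphisms_prod_cat:
  assumes cat1: "is_category C1" and cat2: "is_category C2" and "locally_finite C2"
    and "ramsey_morphisms C1" "ramsey_morphisms C2"
  shows "ramsey_morphisms (prod_cat C1 C2)"
  unfolding ramsey_morphisms_def
proof (intro allI impI ballI)
  fix k :: nat and A B
  assume "2 \<le> k"
    and AB: "A \<in> Obj (prod_cat C1 C2)" "B \<in> Obj (prod_cat C1 C2)" "arrow_to (prod_cat C1 C2) A B"
  obtain A1 A2 B1 B2 where split: "A = (A1, A2)" "B = (B1, B2)"
    and objs: "A1 \<in> Obj C1" "A2 \<in> Obj C2" "B1 \<in> Obj C1" "B2 \<in> Obj C2"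
    and arrows: "arrow_to C1 A1 B1" "arrow_to C2 A2 B2"
    by (rule prod_cat_arrow_cases[OF AB])
  obtain D2 where D2: "D2 \<in> Obj C2" "ramsey_arrow_hom C2 D2 B2 A2 k"
    using assms(5) \<open>2 \<le> k\<close> objs arrows unfolding ramsey_morphisms_def by blast
  define Y where "Y = hom C2 A2 D2 \<rightarrow>\<^sub>E {..<k}"
  have "finite Y"
    using assms(3) objs D2(1) by (simp add: Y_def locally_finite_def finite_PiE)
  obtain D1 where D1: "D1 \<in> Obj C1" "ramsey_arrow_hom C1 D1 B1 A1 (max 2 (card Y))"
    using assms(4) objs arrows unfolding ramsey_morphisms_def by (meson max.cobounded1)
  have "mono_copies C1 (\<lambda>f. f) D1 B1 A1 {..<max 2 (card Y)}"
    using D1(2) ramsey_arrow_hom_iff_mono_copies[OF cat1] by blast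
  then have mono1: "mono_copies C1 (\<lambda>f. f) D1 B1 A1 Y"
    by (rule mono_copies_finite_colours[OF cat1 _ \<open>finite Y\<close>]) simp
  have mono2: "mono_copies C2 (\<lambda>f. f) D2 B2 A2 {..<k}"
    using D2(2) ramsey_arrow_hom_iff_mono_copies[OF cat2] by blast
  obtain f0 where f0: "f0 \<in> hom C1 A1 B1"
    using arrows(1) unfolding arrow_to_def by blast
  have "mono_copies (prod_cat C1 C2) (\<lambda>f. f) (D1, D2) (B1, B2) (A1, A2) {..<k}"
    by (rule mono_copies_prod_cat[where join = Pair,
          OF cat1 cat2 _ _ f0 mono1[unfolded Y_def] mono2]) simp_all
  then have "ramsey_arrow_hom (prod_cat C1 C2) (D1, D2) B A k"
    using arrows D1(2) D2(2)
    by (simp add: split ramsey_arrow_hom_iff_mono_copies is_category_prod_cat cat1 cat2 arrow_to_prod_cat)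
  moreover have "(D1, D2) \<in> Obj (prod_cat C1 C2)"
    using D1(1) D2(1) by (simp add: Obj_prod_cat)
  ultimately show "\<exists>D \<in> Obj (prod_cat C1 C2). ramsey_arrow_hom (prod_cat C1 C2) D B A k"
    by blast
qed

theorem theorem8p1:
  fixes C1 :: "('o1, 'm1) cat" and C2 :: "('o2, 'm2) cat"
  assumes "is_category C1" and "is_category C2"
    and "locally_finite C1" and "locally_finite C2"
  shows "(ramsey_objects C1 \<and> ramsey_objects C2 \<longrightarrow> ramsey_objects (prod_cat C1 C2))
       \<and> (ramsey_morphisms C1 \<and> ramsey_morphisms C2 \<longrightarrow> ramsey_morphisms (prod_cat C1 C2))"
  using ramsey_objects_prod_cat[OF assms(1,2,4)] ramsey_morphisms_prod_cat[OF assms(1,2,4)]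
  by blast

end
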